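(* Let $P,Q\in\mathbb P_d$ and let $R=\gamma^{\mathrm{BW}}_{PQ}(t)$ for some $t\in[0,1]$. Then $\operatorname{F}_R(P,Q)=\operatorname{F}^{\mathrm U}(P,Q)$.
   Context: $\mathbb P_d$ is the set of $d\times d$ complex positive definite matrices; $A\#B:=A^{1/2}(A^{-1/2}BA^{-1/2})^{1/2}A^{1/2}$ is the matrix geometric mean. The Bures–Wasserstein geodesic between $A,B\in\mathbb P_d$ is $\gamma^{\mathrm{BW}}_{AB}(t):=[(1-t)\mathbb I+t\,A^{-1}\#B]\,A\,[(1-t)\mathbb I+t\,A^{-1}\#B]$, $t\in[0,1]$. The generalized fidelity is $\operatorname{F}_R(P,Q):=\operatorname{Tr}\big[\sqrt{R^{1/2}PR^{1/2}}\,R^{-1}\sqrt{R^{1/2}QR^{1/2}}\big]$, and the Uhlmann fidelity is $\operatorname{F}^{\mathrm U}(P,Q):=\operatorname{Tr}\sqrt{P^{1/2}QP^{1/2}}$. *)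

theory Defs
  imports "HOL-Analysis.Analysis"
begin

text \<open>Complex d x d matrices are modelled as complex^'n^'n with d = CARD('n).\<close>

definition cadjoint :: "complex^'n^'n \<Rightarrow> complex^'n^'n" where
  "cadjoint A = (\<chi> i j. cnj (A $ j $ i))"

definition hermitian_mat :: "complex^'n^'n \<Rightarrow> bool" where
  "hermitian_mat A \<longleftrightarrow> cadjoint A = A"

definition qform :: "complex^'n^'n \<Rightarrow> complex^'n \<Rightarrow> complex" where
  "qform A x = (\<Sum>i\<in>UNIV. cnj (x $ i) * ((A *v x) $ i))"

definition pos_def :: "complex^'n^'n \<Rightarrow> bool" where
  "pos_def A \<longleftrightarrow> hermitian_mat A \<and> (\<forall>x. x \<noteq> 0 \<longrightarrow> 0 < Re (qform A x))"

definition pos_semidef :: "complex^'n^'n \<Rightarrow> bool" where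
  "pos_semidef A \<longleftrightarrow> hermitian_mat A \<and> (\<forall>x. 0 \<le> Re (qform A x))"

definition msqrt :: "complex^'n^'n \<Rightarrow> complex^'n^'n" where
  "msqrt A = (THE B. pos_semidef B \<and> B ** B = A)"

definition gmean :: "complex^'n^'n \<Rightarrow> complex^'n^'n \<Rightarrow> complex^'n^'n" where
  "gmean A B = msqrt A ** msqrt (matrix_inv (msqrt A) ** B ** matrix_inv (msqrt A)) ** msqrt A"

definition bw_geodesic :: "complex^'n^'n \<Rightarrow> complex^'n^'n \<Rightarrow> real \<Rightarrow> complex^'n^'n" where
  "bw_geodesic A B t =
     (let M = (1 - t) *\<^sub>R mat 1 + t *\<^sub>R gmean (matrix_inv A) B in M ** A ** M)"

definition gen_fidelity :: "complex^'n^'n \<Rightarrow> complex^'n^'n \<Rightarrow> complex^'n^'n \<Rightarrow> complex" where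
  "gen_fidelity R P Q =
     trace (msqrt (msqrt R ** P ** msqrt R) ** matrix_inv R ** msqrt (msqrt R ** Q ** msqrt R))"

definition uhlmann_fidelity :: "complex^'n^'n \<Rightarrow> complex^'n^'n \<Rightarrow> complex" where
  "uhlmann_fidelity P Q = trace (msqrt (msqrt P ** Q ** msqrt P))"

end

theory Submission
  imports Defs
begin

text \<open>
  Let G = P^-1 # Q. It is the positive definite solution of the Riccati equation G P G = Q, and
  R = M P M for M = (1 - t) I + t G, a positive definite matrix commuting with G. Hence
  P = M^-1 R M^-1 and Q = L R L with L = M^-1 G positive definite. For such sandwiches
  (R^1/2 K R K R^1/2)^1/2 = R^1/2 K R^1/2, so F_R(P, Q) = tr (M^-1 L R) = tr (G P); in the same way
  (P^1/2 Q P^1/2)^1/2 = P^1/2 G P^1/2, whose trace is again tr (G P).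
  Everything rests on the existence and uniqueness of positive semidefinite square roots, which
  come from the spectral theorem; eigenvectors are found by maximising the Hermitian form on
  unit spheres of invariant subspaces.
\<close>

section \<open>The complex inner product and the adjoint\<close>

definition cinner :: "complex^'n \<Rightarrow> complex^'n \<Rightarrow> complex" where
  "cinner x y = (\<Sum>i\<in>UNIV. cnj (x$i) * y$i)"

lemma vec_scaleR_nth [simp]: "((c::real) *\<^sub>R (x::complex^'n)) $ i = of_real c * x $ i"
  by (simp only: vector_scaleR_component) (simp add: scaleR_conv_of_real)

lemma qform_cinner: "qform A x = cinner x (A *v x)"
  by (simp add: qform_def cinner_def)

lemma cinner_add_left: "cinner (x + y) z = cinner x z + cinner y z"
  by (simp add: cinner_def distrib_right sum.distrib)

lemma cinner_add_right: "cinner x (y + z) = cinner x y + cinner x z"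
  by (simp add: cinner_def distrib_left sum.distrib)

lemma cinner_diff_right: "cinner x (y - z) = cinner x y - cinner x z"
  by (simp add: cinner_def right_diff_distrib sum_subtractf)

lemma cinner_smult_left: "cinner (c *s x) y = cnj c * cinner x y"
  by (simp add: cinner_def sum_distrib_left algebra_simps)

lemma cinner_smult_right: "cinner x (c *s y) = c * cinner x y"
  by (simp add: cinner_def sum_distrib_left algebra_simps)

lemma cinner_scaleR_left: "cinner (c *\<^sub>R x) y = of_real c * cinner x y"
  unfolding cinner_def vec_scaleR_nth complex_cnj_mult complex_cnj_complex_of_real sum_distrib_left
  by (intro sum.cong refl) (simp only: mult_ac)

lemma cinner_scaleR_right: "cinner x (c *\<^sub>R y) = of_real c * cinner x y"
  unfolding cinner_def vec_scaleR_nth sum_distrib_left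
  by (intro sum.cong refl) (simp only: mult_ac)

lemma cinner_zero_right [simp]: "cinner x 0 = 0"
  by (simp add: cinner_def)

lemma cinner_commute_cnj: "cnj (cinner x y) = cinner y x"
  by (simp add: cinner_def mult.commute)

lemma Re_cinner: "Re (cinner x y) = inner x y"
  by (simp add: cinner_def inner_vec_def inner_complex_def Re_sum)

lemma cinner_self_norm: "cinner x x = of_real ((norm x)\<^sup>2)"
proof -
  have "Im (cinner x x) = 0"
    by (simp add: cinner_def Im_sum algebra_simps)
  then show ?thesis
    using Re_cinner[of x x] by (simp add: complex_eq_iff power2_norm_eq_inner)
qed

lemma cinner_self_eq_0: "cinner x x = 0 \<longleftrightarrow> x = 0"
  by (simp add: cinner_self_norm)

lemma complex_eq_0_if_Re_eq_0_scaled_ii: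
  assumes "Re z = 0" and "Re (cnj \<i> * z) = 0"
  shows "z = 0"
  using assms by (simp add: complex_eq_iff)

lemma cadjoint_mult: "cadjoint (A ** B) = cadjoint B ** cadjoint A"
  by (simp add: cadjoint_def matrix_matrix_mult_def vec_eq_iff mult.commute)

lemma cadjoint_cadjoint [simp]: "cadjoint (cadjoint A) = A"
  by (simp add: cadjoint_def vec_eq_iff)

lemma cadjoint_add: "cadjoint (A + B) = cadjoint A + cadjoint B"
  by (simp add: cadjoint_def vec_eq_iff)

lemma cadjoint_diff: "cadjoint (A - B) = cadjoint A - cadjoint B"
  by (simp add: cadjoint_def vec_eq_iff)

lemma cadjoint_scaleR: "cadjoint (c *\<^sub>R A) = c *\<^sub>R cadjoint A"
  by (simp add: cadjoint_def vec_eq_iff)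

lemma cadjoint_mat [simp]: "cadjoint (mat k) = mat (cnj k)"
  by (simp add: cadjoint_def vec_eq_iff mat_def)

lemma cinner_cadjoint: "cinner x (A *v y) = cinner (cadjoint A *v x) y"
  unfolding cinner_def cadjoint_def matrix_vector_mult_def
  by (simp add: sum_distrib_left sum_distrib_right, subst sum.swap) (simp add: algebra_simps)

lemma hermitian_cinner: "hermitian_mat A \<Longrightarrow> cinner x (A *v y) = cinner (A *v x) y"
  by (metis cinner_cadjoint hermitian_mat_def)

lemma hermitian_mat_congruence:
  "hermitian_mat A \<Longrightarrow> hermitian_mat (cadjoint B ** A ** B)"
  by (simp add: hermitian_mat_def cadjoint_mult matrix_mul_assoc)

lemma matrix_vector_mult_scaleR_complex:
  "(A::complex^'n^'m) *v ((c::real) *\<^sub>R x) = c *\<^sub>R (A *v x)"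
  by (simp add: vec_eq_iff matrix_vector_mult_def scaleR_sum_right mult.left_commute)

lemma scaleR_matrix_vector_mult_complex:
  "((c::real) *\<^sub>R (A::complex^'n^'m)) *v x = c *\<^sub>R (A *v x)"
  by (simp add: vec_eq_iff matrix_vector_mult_def scaleR_sum_right)

lemma matrix_add_rdistrib_complex: "((A::complex^'n^'m) + B) ** C = A ** C + B ** C"
  by (vector matrix_matrix_mult_def sum.distrib[symmetric] field_simps)

lemma matrix_mul_inverse_cancel: "(A::complex^'n^'n) ** B = mat 1 \<Longrightarrow> A ** (B ** C) = C"
  by (simp add: matrix_mul_assoc)

section \<open>Quadratic forms and positivity\<close>

lemma qform_add: "qform (A + B) x = qform A x + qform B x"
  by (simp add: qform_cinner matrix_vector_mult_add_rdistrib cinner_add_right)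

lemma qform_scaleR: "qform ((a::real) *\<^sub>R A) x = of_real a * qform A x"
  by (simp add: qform_cinner scaleR_matrix_vector_mult_complex cinner_scaleR_right)

lemma qform_scaleR_vector: "qform A ((c::real) *\<^sub>R x) = of_real (c\<^sup>2) * qform A x"
  by (simp add: qform_cinner matrix_vector_mult_scaleR_complex cinner_scaleR_left
      cinner_scaleR_right power2_eq_square)

lemma qform_congruence: "qform (cadjoint B ** A ** B) x = qform A (B *v x)"
  by (simp add: qform_cinner cinner_cadjoint matrix_vector_mul_assoc[symmetric])

lemma qform_zero [simp]: "qform A 0 = 0"
  by (simp add: qform_cinner)

lemma continuous_on_Re_qform: "continuous_on S (\<lambda>x. Re (qform A x))"
  unfolding qform_def matrix_vector_mult_def by (simp, intro continuous_intros)

lemma quadratic_nonpos_imp_linear_coeff_zero: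
  fixes a q :: real
  assumes "\<And>s. 2 * s * a + s\<^sup>2 * q \<le> 0"
  shows "a = 0"
proof -
  define k where "k = \<bar>q\<bar> + 1"
  have k: "k \<ge> 1" by (simp add: k_def)
  have "k\<^sup>2 * (2 * (a/k) * a + (a/k)\<^sup>2 * q) \<le> 0"
    using assms[of "a/k"] by (simp add: mult_nonneg_nonpos)
  also have "k\<^sup>2 * (2 * (a/k) * a + (a/k)\<^sup>2 * q) = a\<^sup>2 * (2 * k + q)"
    using k by (simp add: field_simps power2_eq_square)
  finally have "a\<^sup>2 * (2 * k + q) \<le> 0" .
  moreover have "2 * k + q > 0" unfolding k_def by (simp add: abs_if)
  ultimately show ?thesis by (simp add: mult_le_0_iff)
qed

lemma Re_qform_add_scaleR:
  assumes "hermitian_mat K"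
  shows "Re (qform K (v + s *\<^sub>R y))
           = Re (qform K v) + 2 * s * Re (cinner y (K *v v)) + s\<^sup>2 * Re (qform K y)"
proof -
  have "cinner v (K *v y) = cnj (cinner y (K *v v))"
    using hermitian_cinner[OF assms, of v y] cinner_commute_cnj by metis
  then show ?thesis
    by (simp add: qform_cinner matrix_vector_right_distrib matrix_vector_mult_scaleR_complex
        cinner_add_left cinner_add_right cinner_scaleR_left cinner_scaleR_right power2_eq_square
        algebra_simps)
qed

lemma hermitian_qform_max_imp_orthogonal:
  fixes K :: "complex^'n^'n"
  assumes K: "hermitian_mat K" and W: "subspace W" "\<And>y. y \<in> W \<Longrightarrow> \<i> *s y \<in> W"
    and nonpos: "\<And>x. x \<in> W \<Longrightarrow> Re (qform K x) \<le> 0"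
    and v: "v \<in> W" "Re (qform K v) = 0" and y: "y \<in> W"
  shows "cinner y (K *v v) = 0"
proof -
  have Re_zero: "Re (cinner z (K *v v)) = 0" if z: "z \<in> W" for z
  proof (rule quadratic_nonpos_imp_linear_coeff_zero[where q = "Re (qform K z)"])
    fix s :: real
    have "v + s *\<^sub>R z \<in> W" using W(1) v(1) z by (simp add: subspace_add subspace_scale)
    then show "2 * s * Re (cinner z (K *v v)) + s\<^sup>2 * Re (qform K z) \<le> 0"
      using nonpos Re_qform_add_scaleR[OF K, of v s z] v(2) by fastforce
  qed
  show ?thesis
    using Re_zero[OF y] Re_zero[OF W(2)[OF y]]
    by (intro complex_eq_0_if_Re_eq_0_scaled_ii) (simp_all add: cinner_smult_left)
qed

lemma pos_semidef_kernel:
  assumes "pos_semidef A" and "Re (qform A x) = 0"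
  shows "A *v x = 0"
proof -
  have h: "hermitian_mat (- A)" using assms(1)
    by (simp add: pos_semidef_def hermitian_mat_def cadjoint_def vec_eq_iff)
  have neg: "(- A) *v z = - (A *v z)" for z
    by (simp add: matrix_vector_mult_def vec_eq_iff sum_negf)
  \<comment> \<open>\<open>x\<close> maximises the form of \<open>- A\<close>, so \<open>A x\<close> is orthogonal to everything.\<close>
  have "cinner (A *v x) ((- A) *v x) = 0"
    using assms by (intro hermitian_qform_max_imp_orthogonal[OF h, of UNIV])
      (auto simp: qform_cinner neg cinner_def sum_negf pos_semidef_def)
  then have "cinner (A *v x) (A *v x) = 0"
    by (simp add: neg cinner_def sum_negf)
  then show ?thesis by (simp add: cinner_self_eq_0)
qed

lemma pos_def_imp_pos_semidef: "pos_def A \<Longrightarrow> pos_semidef A"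
  unfolding pos_def_def pos_semidef_def
  by (metis less_eq_real_def order_refl qform_zero zero_complex.sel(1))

lemma pos_def_hermitian: "pos_def A \<Longrightarrow> cadjoint A = A"
  by (simp add: pos_def_def hermitian_mat_def)

lemma pos_def_injective:
  assumes "pos_def A" and "A *v x = 0"
  shows "x = 0"
  using assms unfolding pos_def_def qform_def by (auto simp: sum.neutral)

lemma pos_def_invertible:
  assumes "pos_def A"
  shows "invertible A"
proof -
  have "inj ((*v) A)"
  proof (rule injI)
    fix x y assume "A *v x = A *v y"
    then have "A *v (x - y) = 0" by (simp add: matrix_vector_mult_diff_distrib)
    then show "x = y" using pos_def_injective[OF assms] right_minus_eq by metis
  qed
  then show ?thesis using matrix_left_invertible_injective invertible_left_inverse by blast
qed

lemma pos_def_congruence: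
  fixes A B :: "complex^'n^'n"
  assumes "pos_def A" and "invertible B"
  shows "pos_def (cadjoint B ** A ** B)"
  unfolding pos_def_def
proof safe
  show "hermitian_mat (cadjoint B ** A ** B)"
    using assms(1) by (simp add: pos_def_def hermitian_mat_congruence)
  fix x :: "complex^'n" assume "x \<noteq> 0"
  then have "B *v x \<noteq> 0"
    using inj_matrix_vector_mult[OF assms(2)] by (metis injD matrix_vector_mult_0_right)
  then show "0 < Re (qform (cadjoint B ** A ** B) x)"
    using assms(1) by (simp add: qform_congruence pos_def_def)
qed

lemma pos_semidef_congruence:
  "pos_semidef A \<Longrightarrow> pos_semidef (cadjoint B ** A ** B)"
  by (simp add: pos_semidef_def hermitian_mat_congruence qform_congruence)

lemma pos_def_mat_1: "pos_def (mat 1 :: complex^'n^'n)"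
  by (simp add: pos_def_def hermitian_mat_def qform_cinner Re_cinner)

lemma pos_def_convex_comb:
  fixes A B :: "complex^'n^'n"
  assumes "pos_def A" and "pos_def B" and "0 \<le> a" and "0 \<le> b" and "0 < a + b"
  shows "pos_def (a *\<^sub>R A + b *\<^sub>R B)"
  unfolding pos_def_def
proof safe
  show "hermitian_mat (a *\<^sub>R A + b *\<^sub>R B)"
    using assms(1,2) by (simp add: pos_def_def hermitian_mat_def cadjoint_add cadjoint_scaleR)
  fix x :: "complex^'n" assume "x \<noteq> 0"
  then have "0 < Re (qform A x)" and "0 < Re (qform B x)"
    using assms(1,2) by (auto simp: pos_def_def)
  then have "0 < a * Re (qform A x) + b * Re (qform B x)"
    using assms(3-5) by (cases "a = 0") (simp_all add: add_pos_nonneg)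
  then show "0 < Re (qform (a *\<^sub>R A + b *\<^sub>R B) x)"
    by (simp add: qform_add qform_scaleR)
qed

lemma
  fixes A :: "complex^'n^'n"
  assumes "invertible A"
  shows matrix_inv_right: "A ** matrix_inv A = mat 1"
    and matrix_inv_left: "matrix_inv A ** A = mat 1"
proof -
  have "A ** matrix_inv A = mat 1 \<and> matrix_inv A ** A = mat 1"
    using assms unfolding invertible_def matrix_inv_def by (rule someI_ex)
  then show "A ** matrix_inv A = mat 1" "matrix_inv A ** A = mat 1" by auto
qed

lemma matrix_inv_eqI:
  fixes A B :: "complex^'n^'n"
  assumes "A ** B = mat 1"
  shows "matrix_inv A = B"
proof -
  have "invertible A" using assms invertible_right_inverse by blast
  then have "matrix_inv A = matrix_inv A ** (A ** B)" by (simp add: assms)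
  also have "\<dots> = B" by (simp add: matrix_mul_assoc matrix_inv_left[OF \<open>invertible A\<close>])
  finally show ?thesis .
qed

lemma matrix_inv_eqI_left: "(B::complex^'n^'n) ** A = mat 1 \<Longrightarrow> matrix_inv A = B"
  using matrix_inv_eqI matrix_left_right_inverse by blast

lemma matrix_inv_matrix_inv: "invertible (A::complex^'n^'n) \<Longrightarrow> matrix_inv (matrix_inv A) = A"
  by (rule matrix_inv_eqI) (rule matrix_inv_left)

lemma hermitian_matrix_inv:
  assumes "hermitian_mat A" and "invertible A"
  shows "hermitian_mat (matrix_inv A)"
proof -
  have "cadjoint (matrix_inv A) ** A = mat 1"
    using arg_cong[OF matrix_inv_right[OF assms(2)], of cadjoint] assms(1)
    by (simp add: cadjoint_mult hermitian_mat_def)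
  then show ?thesis unfolding hermitian_mat_def using matrix_inv_eqI_left by metis
qed

lemma pos_def_matrix_inv:
  assumes "pos_def A"
  shows "pos_def (matrix_inv A)"
proof -
  have A: "invertible A" by (rule pos_def_invertible[OF assms])
  then have inv: "invertible (matrix_inv A)"
    unfolding invertible_def using matrix_inv_left[OF A] matrix_inv_right[OF A] by blast
  have "hermitian_mat (matrix_inv A)"
    using hermitian_matrix_inv assms A pos_def_def by blast
  then have "cadjoint (matrix_inv A) ** A ** matrix_inv A = matrix_inv A"
    by (simp add: hermitian_mat_def matrix_inv_left[OF A])
  then show ?thesis using pos_def_congruence[OF assms inv] by simp
qed

section \<open>The spectral theorem for Hermitian matrices\<close>

lemma exists_orthogonal_to_finite:
  fixes S :: "(complex^'n) set"
  assumes "finite S" and "card S < CARD('n)"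
  shows "\<exists>x. x \<noteq> 0 \<and> (\<forall>u\<in>S. cinner u x = 0)"
proof -
  \<comment> \<open>Real orthogonality to both \<open>u\<close> and \<open>\<i> u\<close> is complex orthogonality to \<open>u\<close>.\<close>
  define T where "T = S \<union> (\<lambda>u. \<i> *s u) ` S"
  have fT: "finite T" using assms(1) by (simp add: T_def)
  have "card T \<le> card S + card S"
    unfolding T_def by (metis card_Un_le card_image_le[OF assms(1)] add_left_mono order_trans)
  then have "dim T < DIM(complex^'n)"
    using dim_le_card[OF span_superset fT] assms(2) by simp
  then obtain x :: "complex^'n" where x: "x \<noteq> 0" "\<And>y. y \<in> span T \<Longrightarrow> orthogonal x y"
    using orthogonal_to_subspace_exists by blast
  have "cinner u x = 0" if u: "u \<in> S" for u
  proof (rule complex_eq_0_if_Re_eq_0_scaled_ii)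
    have "inner x u = 0" "inner x (\<i> *s u) = 0"
      using x(2)[OF span_base] u by (auto simp: T_def orthogonal_def)
    then show "Re (cinner u x) = 0" "Re (cnj \<i> * cinner u x) = 0"
      using Re_cinner[of "\<i> *s u" x] by (simp_all add: Re_cinner inner_commute cinner_smult_left)
  qed
  then show ?thesis using x(1) by blast
qed

text \<open>A maximiser of the Hermitian form on the unit sphere of an invariant subspace is an eigenvector.\<close>

lemma hermitian_eigenvector_in_invariant_subspace:
  fixes H :: "complex^'n^'n"
  assumes H: "hermitian_mat H" and W: "subspace W" "\<And>y. y \<in> W \<Longrightarrow> \<i> *s y \<in> W"
    and HW: "\<And>y. y \<in> W \<Longrightarrow> H *v y \<in> W" and x0: "x0 \<in> W" "x0 \<noteq> 0"
  shows "\<exists>v\<in>W. norm v = 1 \<and> (\<exists>l::real. H *v v = l *\<^sub>R v)"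
proof -
  define K0 where "K0 = W \<inter> sphere 0 1"
  have K0: "compact K0"
    unfolding K0_def using compact_Int_closed[OF compact_sphere closed_subspace[OF W(1)]]
    by (simp add: Int_commute)
  have "(1 / norm x0) *\<^sub>R x0 \<in> K0"
    using x0 W(1) by (simp add: K0_def subspace_scale)
  then have "K0 \<noteq> {}" by blast
  then obtain v where v: "v \<in> K0"
    and v_max: "\<And>y. y \<in> K0 \<Longrightarrow> Re (qform H y) \<le> Re (qform H v)"
    using continuous_attains_sup[OF K0 _ continuous_on_Re_qform] by blast
  define l where "l = Re (qform H v)"
  have vW: "v \<in> W" and v_norm: "norm v = 1" using v by (auto simp: K0_def)
  have bound: "Re (qform H x) \<le> l * (norm x)\<^sup>2" if x: "x \<in> W" for x
  proof (cases "x = 0")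
    case False
    have "(1 / norm x) *\<^sub>R x \<in> K0" using x False W(1) by (simp add: K0_def subspace_scale)
    then have "Re (qform H ((1 / norm x) *\<^sub>R x)) \<le> l" using v_max l_def by blast
    then have "(1 / norm x)\<^sup>2 * Re (qform H x) \<le> l" by (simp add: qform_scaleR_vector)
    then show ?thesis using False by (simp add: field_simps power2_eq_square)
  qed simp
  define K where "K = H - l *\<^sub>R mat 1"
  have Kv: "K *v y = H *v y - l *\<^sub>R y" for y
    by (simp add: K_def matrix_vector_mult_diff_rdistrib scaleR_matrix_vector_mult_complex)
  have K: "hermitian_mat K"
    using H by (simp add: K_def hermitian_mat_def cadjoint_diff cadjoint_scaleR)
  have qform_K: "Re (qform K y) = Re (qform H y) - l * (norm y)\<^sup>2" for y
    by (simp add: qform_cinner Kv cinner_diff_right cinner_scaleR_right cinner_self_norm)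
  have "cinner (K *v v) (K *v v) = 0"
  proof (rule hermitian_qform_max_imp_orthogonal[OF K W _ vW])
    show "Re (qform K x) \<le> 0" if "x \<in> W" for x using bound[OF that] qform_K[of x] by simp
    show "Re (qform K v) = 0" using qform_K[of v] v_norm l_def by simp
    show "K *v v \<in> W"
      unfolding Kv using W(1) HW[OF vW] vW by (simp add: subspace_diff subspace_scale)
  qed
  then have "H *v v = l *\<^sub>R v" by (simp add: cinner_self_eq_0 Kv)
  then show ?thesis using vW v_norm by blast
qed

definition orthonormal_eigenvectors :: "complex^'n^'n \<Rightarrow> (complex^'n) set \<Rightarrow> bool" where
  "orthonormal_eigenvectors H S \<longleftrightarrow> finite S \<and> (\<forall>u\<in>S. cinner u u = 1) \<and>
     (\<forall>u\<in>S. \<forall>w\<in>S. u \<noteq> w \<longrightarrow> cinner u w = 0) \<and> (\<forall>u\<in>S. \<exists>l::real. H *v u = l *\<^sub>R u)"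

lemma orthonormal_eigenvectors_extend:
  fixes H :: "complex^'n^'n"
  assumes H: "hermitian_mat H" and S: "orthonormal_eigenvectors H S" and card: "card S < CARD('n)"
  shows "\<exists>v. v \<notin> S \<and> orthonormal_eigenvectors H (insert v S)"
proof -
  define W where "W = {x. \<forall>u\<in>S. cinner u x = 0}"
  have W: "subspace W"
    unfolding subspace_def W_def by (simp add: cinner_add_right cinner_scaleR_right)
  have iW: "\<i> *s y \<in> W" if "y \<in> W" for y
    using that by (simp add: W_def cinner_smult_right)
  have HW: "H *v y \<in> W" if y: "y \<in> W" for y
  proof -
    have "cinner u (H *v y) = 0" if u: "u \<in> S" for u
    proof -
      obtain lu :: real where "H *v u = lu *\<^sub>R u"
        using S u unfolding orthonormal_eigenvectors_def by blast
      then show ?thesis using hermitian_cinner[OF H] y u by (simp add: W_def cinner_scaleR_left)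
    qed
    then show ?thesis by (simp add: W_def)
  qed
  have "finite S" using S by (simp add: orthonormal_eigenvectors_def)
  then obtain x0 where x0: "x0 \<in> W" "x0 \<noteq> 0"
    using exists_orthogonal_to_finite[OF _ card] by (auto simp: W_def)
  obtain v l where v: "v \<in> W" "norm v = 1" and ev: "H *v v = l *\<^sub>R v"
    using hermitian_eigenvector_in_invariant_subspace[OF H W iW HW x0] by blast
  have vv: "cinner v v = 1" using v(2) by (simp add: cinner_self_norm)
  then have "v \<notin> S" using v(1) by (auto simp: W_def)
  moreover have "cinner v u = 0" if "u \<in> S" for u
    using v(1) that cinner_commute_cnj[of u v] by (simp add: W_def)
  ultimately show ?thesis
    using S v(1) vv ev by (auto simp: orthonormal_eigenvectors_def W_def)
qed

lemma hermitian_orthonormal_eigenbasis: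
  fixes H :: "complex^'n^'n"
  assumes "hermitian_mat H"
  shows "\<exists>S. orthonormal_eigenvectors H S \<and> card S = CARD('n)"
proof -
  have "\<exists>S. orthonormal_eigenvectors H S \<and> card S = k" if "k \<le> CARD('n)" for k
    using that
  proof (induction k)
    case 0
    show ?case by (rule exI[of _ "{}"]) (simp add: orthonormal_eigenvectors_def)
  next
    case (Suc k)
    then obtain S where S: "orthonormal_eigenvectors H S" "card S = k" by auto
    then obtain v where v: "v \<notin> S" "orthonormal_eigenvectors H (insert v S)"
      using orthonormal_eigenvectors_extend[OF assms S(1)] Suc.prems by auto
    have "finite S" using S(1) by (simp add: orthonormal_eigenvectors_def)
    then have "card (insert v S) = Suc k" using v(1) S(2) by simp
    then show ?case using v(2) by blast
  qed
  then show ?thesis by blast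
qed

definition real_diag :: "('n \<Rightarrow> real) \<Rightarrow> complex^'n^'n" where
  "real_diag d = (\<chi> i j. if i = j then of_real (d i) else 0)"

lemma hermitian_spectral_decomposition:
  fixes H :: "complex^'n^'n"
  assumes "hermitian_mat H"
  obtains U d where "cadjoint U ** U = mat 1" and "U ** cadjoint U = mat 1"
    and "H = U ** real_diag d ** cadjoint U"
proof -
  obtain S where S: "orthonormal_eigenvectors H S" "card S = CARD('n)"
    using hermitian_orthonormal_eigenbasis[OF assms] by blast
  then obtain e where e: "bij_betw e (UNIV::'n set) S"
    using finite_same_card_bij[of "UNIV::'n set" S] by (auto simp: orthonormal_eigenvectors_def)
  have eS: "e j \<in> S" for j using e by (auto simp: bij_betw_def)
  have e_inj: "e j = e k \<Longrightarrow> j = k" for j k using e by (auto simp: bij_betw_def inj_def)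
  define U :: "complex^'n^'n" where "U = (\<chi> i j. e j $ i)"
  define d where "d j = (SOME l. H *v e j = l *\<^sub>R e j)" for j
  have d: "H *v e j = d j *\<^sub>R e j" for j
  proof -
    have "\<exists>l. H *v e j = l *\<^sub>R e j" using S(1) eS by (auto simp: orthonormal_eigenvectors_def)
    then show ?thesis unfolding d_def by (rule someI_ex)
  qed
  have "(cadjoint U ** U) $ j $ k = cinner (e j) (e k)" for j k
    by (simp add: U_def cadjoint_def matrix_matrix_mult_def cinner_def)
  moreover have "cinner (e j) (e k) = (if j = k then 1 else 0)" for j k
    using S(1) eS e_inj unfolding orthonormal_eigenvectors_def by (cases "j = k") (simp, metis)
  ultimately have UU: "cadjoint U ** U = mat 1" by (simp add: vec_eq_iff mat_def)
  then have UU': "U ** cadjoint U = mat 1" using matrix_left_right_inverse by blast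
  have HU: "H ** U = U ** real_diag d"
  proof -
    have "(H ** U) $ i $ j = (H *v e j) $ i" for i j
      by (simp add: U_def matrix_matrix_mult_def matrix_vector_mult_def)
    moreover have "(U ** real_diag d) $ i $ j = of_real (d j) * e j $ i" for i j
      by (simp add: U_def real_diag_def matrix_matrix_mult_def if_distrib mult.commute cong: if_cong)
    ultimately show ?thesis by (simp add: vec_eq_iff d del: vector_scaleR_component)
  qed
  have "H = H ** U ** cadjoint U" by (simp add: UU' flip: matrix_mul_assoc)
  also have "\<dots> = U ** real_diag d ** cadjoint U" by (simp add: HU)
  finally show ?thesis using UU UU' that by blast
qed

lemma sum_if_eq_mult: "(\<Sum>j\<in>UNIV. (if (i::'n::finite) = j then c else 0) * f j) = c * (f i :: complex)"
proof -
  have "(\<Sum>j\<in>UNIV. (if i = j then c else 0) * f j) = (\<Sum>j\<in>UNIV. if j = i then c * f i else 0)"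
    by (rule sum.cong) auto
  then show ?thesis by simp
qed

lemma real_diag_mult: "real_diag a ** real_diag b = real_diag (\<lambda>i. a i * b i)"
  by (simp only: vec_eq_iff real_diag_def matrix_matrix_mult_def vec_lambda_beta sum_if_eq_mult) auto

lemma real_diag_axis: "real_diag d *v axis j 1 = d j *\<^sub>R axis j 1"
  by (simp only: vec_eq_iff real_diag_def matrix_vector_mult_def vec_lambda_beta sum_if_eq_mult
      vec_scaleR_nth) (auto simp: axis_def)

lemma qform_real_diag: "qform (real_diag d) y = (\<Sum>i\<in>UNIV. of_real (d i) * (cnj (y$i) * y$i))"
  by (simp only: qform_def real_diag_def matrix_vector_mult_def vec_lambda_beta sum_if_eq_mult)
    (simp add: mult.left_commute)

lemma qform_real_diag_axis: "qform (real_diag d) (axis j 1) = of_real (d j)"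
proof -
  have "of_real (d i) * (cnj (axis j 1 $ i) * axis j 1 $ i) = (if i = j then of_real (d j) else 0)" for i
    by (simp add: axis_def)
  then show ?thesis by (simp add: qform_real_diag)
qed

lemma pos_semidef_real_diag:
  assumes "\<And>i. d i \<ge> 0"
  shows "pos_semidef (real_diag d)"
  unfolding pos_semidef_def
proof safe
  show "hermitian_mat (real_diag d)" by (simp add: hermitian_mat_def real_diag_def cadjoint_def vec_eq_iff)
  fix x
  have "Re (qform (real_diag d) x) = (\<Sum>i\<in>UNIV. d i * ((Re (x$i))\<^sup>2 + (Im (x$i))\<^sup>2))"
    by (simp add: qform_real_diag Re_sum power2_eq_square algebra_simps)
  also have "\<dots> \<ge> 0" using assms by (intro sum_nonneg mult_nonneg_nonneg) auto
  finally show "0 \<le> Re (qform (real_diag d) x)" .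
qed

lemma hermitian_nonzero_eigenvector:
  fixes D :: "complex^'n^'n"
  assumes "hermitian_mat D" and "D \<noteq> 0"
  obtains u l where "u \<noteq> 0" and "l \<noteq> 0" and "D *v u = l *\<^sub>R u"
proof -
  obtain U d where U: "cadjoint U ** U = mat 1" "U ** cadjoint U = mat 1"
    and D: "D = U ** real_diag d ** cadjoint U"
    using hermitian_spectral_decomposition[OF assms(1)] by blast
  obtain j where dj: "d j \<noteq> 0"
  proof (rule ccontr)
    assume "\<not> thesis"
    then have "d i = 0" for i using that by blast
    then have "real_diag d = 0" by (simp add: real_diag_def vec_eq_iff)
    then show False using assms(2) D by simp
  qed
  define u where "u = U *v axis j 1"
  have "cadjoint U *v u = axis j 1" by (simp add: u_def matrix_vector_mul_assoc U)
  then have "u \<noteq> 0" by (metis axis_eq_0_iff matrix_vector_mult_0_right one_neq_zero)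
  moreover have "D *v u = d j *\<^sub>R u"
    by (simp add: D u_def matrix_vector_mul_assoc[symmetric] matrix_mul_assoc[symmetric])
      (simp add: matrix_vector_mul_assoc U real_diag_axis matrix_vector_mult_scaleR_complex)
  ultimately show ?thesis using dj that by blast
qed

section \<open>Positive semidefinite square roots\<close>

lemma pos_semidef_sqrt_exists:
  fixes A :: "complex^'n^'n"
  assumes A: "pos_semidef A"
  obtains B where "pos_semidef B" and "B ** B = A"
proof -
  have "hermitian_mat A" using A by (simp add: pos_semidef_def)
  then obtain U d where U: "cadjoint U ** U = mat 1" "U ** cadjoint U = mat 1"
    and A_eq: "A = U ** real_diag d ** cadjoint U"
    by (rule hermitian_spectral_decomposition)
  have d_nonneg: "d j \<ge> 0" for j
  proof -
    have "cadjoint U ** A ** U = real_diag d"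
      by (simp add: A_eq matrix_mul_assoc) (simp add: U flip: matrix_mul_assoc)
    then have "qform A (U *v axis j 1) = of_real (d j)"
      by (metis qform_congruence qform_real_diag_axis)
    then show ?thesis using A by (metis Re_complex_of_real pos_semidef_def)
  qed
  define B where "B = U ** real_diag (\<lambda>j. sqrt (d j)) ** cadjoint U"
  have "B ** B = U ** (real_diag (\<lambda>j. sqrt (d j)) ** (cadjoint U ** U) ** real_diag (\<lambda>j. sqrt (d j)))
                   ** cadjoint U"
    by (simp add: B_def matrix_mul_assoc)
  also have "\<dots> = A" using d_nonneg by (simp add: U real_diag_mult A_eq)
  finally have "B ** B = A" .
  moreover have "pos_semidef (real_diag (\<lambda>j. sqrt (d j)))"
    by (rule pos_semidef_real_diag) (simp add: d_nonneg)
  then have "pos_semidef B"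
    using pos_semidef_congruence[of _ "cadjoint U"] by (simp add: B_def)
  ultimately show ?thesis using that by blast
qed

lemma pos_semidef_sqrt_unique:
  fixes B C :: "complex^'n^'n"
  assumes B: "pos_semidef B" and C: "pos_semidef C" and BC: "B ** B = C ** C"
  shows "B = C"
proof (rule ccontr)
  assume "B \<noteq> C"
  define D where "D = B - C"
  have D: "hermitian_mat D"
    using B C by (simp add: D_def pos_semidef_def hermitian_mat_def cadjoint_diff)
  obtain u l where u: "u \<noteq> 0" and l: "l \<noteq> 0" and Du: "D *v u = l *\<^sub>R u"
    using hermitian_nonzero_eigenvector[OF D] \<open>B \<noteq> C\<close> by (auto simp: D_def)
  \<comment> \<open>Test \<open>0 = B\<^sup>2 - C\<^sup>2 = D B + C D\<close> against the eigenvector \<open>u\<close>.\<close>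
  have "B *v (B *v u) - C *v (C *v u) = D *v (B *v u) + C *v (D *v u)"
    by (simp add: D_def matrix_vector_mult_diff_rdistrib matrix_vector_mult_diff_distrib)
  moreover have "B *v (B *v u) - C *v (C *v u) = 0"
    using BC by (simp add: matrix_vector_mul_assoc)
  ultimately have "cinner u (D *v (B *v u)) + cinner u (C *v (D *v u)) = 0"
    by (metis cinner_add_right cinner_zero_right)
  moreover have "cinner u (D *v (B *v u)) = of_real l * qform B u"
    using hermitian_cinner[OF D, of u "B *v u"] by (simp add: Du cinner_scaleR_left qform_cinner)
  moreover have "cinner u (C *v (D *v u)) = of_real l * qform C u"
    by (simp add: Du matrix_vector_mult_scaleR_complex cinner_scaleR_right qform_cinner)
  ultimately have "of_real l * (qform B u + qform C u) = 0" by (simp add: distrib_left)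
  then have "qform B u + qform C u = 0" using l by simp
  then have "Re (qform B u) + Re (qform C u) = 0" by (metis plus_complex.sel(1) zero_complex.sel(1))
  moreover have "Re (qform B u) \<ge> 0" "Re (qform C u) \<ge> 0" using B C by (auto simp: pos_semidef_def)
  ultimately have "B *v u = 0" "C *v u = 0"
    using pos_semidef_kernel B C by (metis add_nonneg_eq_0_iff)+
  then have "l *\<^sub>R u = 0" using Du by (simp add: D_def matrix_vector_mult_diff_rdistrib)
  then show False using l u by simp
qed

lemma
  fixes A :: "complex^'n^'n"
  assumes "pos_semidef A"
  shows pos_semidef_msqrt: "pos_semidef (msqrt A)"
    and msqrt_mult_self: "msqrt A ** msqrt A = A"
proof -
  have "\<exists>!B. pos_semidef B \<and> B ** B = A"
    using pos_semidef_sqrt_exists[OF assms] pos_semidef_sqrt_unique by metis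
  then have "pos_semidef (msqrt A) \<and> msqrt A ** msqrt A = A"
    unfolding msqrt_def by (rule theI')
  then show "pos_semidef (msqrt A)" "msqrt A ** msqrt A = A" by auto
qed

lemma msqrt_unique:
  fixes A B :: "complex^'n^'n"
  assumes "pos_semidef B" and "B ** B = A"
  shows "msqrt A = B"
proof -
  have "pos_semidef (cadjoint B ** mat 1 ** B)"
    by (rule pos_semidef_congruence[OF pos_def_imp_pos_semidef[OF pos_def_mat_1]])
  then have "pos_semidef A" using assms by (simp add: pos_semidef_def hermitian_mat_def)
  then show ?thesis
    using assms pos_semidef_msqrt msqrt_mult_self pos_semidef_sqrt_unique by metis
qed

lemma pos_def_msqrt:
  fixes A :: "complex^'n^'n"
  assumes A: "pos_def A"
  shows "pos_def (msqrt A)"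
  unfolding pos_def_def
proof safe
  have S: "pos_semidef (msqrt A)" "msqrt A ** msqrt A = A"
    using pos_semidef_msqrt msqrt_mult_self pos_def_imp_pos_semidef[OF A] by auto
  then show "hermitian_mat (msqrt A)" by (simp add: pos_semidef_def)
  fix x :: "complex^'n" assume x: "x \<noteq> 0"
  show "0 < Re (qform (msqrt A) x)"
  proof (rule ccontr)
    assume "\<not> 0 < Re (qform (msqrt A) x)"
    then have "Re (qform (msqrt A) x) = 0" using S by (simp add: pos_semidef_def not_less order_antisym)
    then have "msqrt A *v x = 0" using pos_semidef_kernel S by blast
    then have "A *v x = 0" using S by (metis matrix_vector_mul_assoc matrix_vector_mult_0_right)
    then show False using pos_def_injective[OF A] x by blast
  qed
qed

lemma hermitian_msqrt: "pos_semidef A \<Longrightarrow> cadjoint (msqrt A) = msqrt A"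
  using pos_semidef_msqrt unfolding pos_semidef_def hermitian_mat_def by blast

lemma matrix_inv_eq_square_matrix_inv_msqrt:
  fixes A :: "complex^'n^'n"
  assumes "pos_def A"
  shows "matrix_inv A = matrix_inv (msqrt A) ** matrix_inv (msqrt A)"
proof (rule matrix_inv_eqI)
  have S: "invertible (msqrt A)" by (rule pos_def_invertible[OF pos_def_msqrt[OF assms]])
  have "A ** (matrix_inv (msqrt A) ** matrix_inv (msqrt A))
          = msqrt A ** (msqrt A ** matrix_inv (msqrt A) ** matrix_inv (msqrt A))"
    using msqrt_mult_self[OF pos_def_imp_pos_semidef[OF assms]] by (simp add: matrix_mul_assoc)
  then show "A ** (matrix_inv (msqrt A) ** matrix_inv (msqrt A)) = mat 1"
    by (simp add: matrix_inv_right[OF S])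
qed

lemma msqrt_sandwich:
  assumes K: "pos_semidef K" and T: "hermitian_mat T"
  shows "msqrt (T ** (K ** (T ** T) ** K) ** T) = T ** K ** T"
proof (rule msqrt_unique)
  show "pos_semidef (T ** K ** T)"
    using pos_semidef_congruence[OF K, of T] T by (simp add: hermitian_mat_def)
  show "(T ** K ** T) ** (T ** K ** T) = T ** (K ** (T ** T) ** K) ** T"
    by (simp add: matrix_mul_assoc)
qed

section \<open>The geometric mean and the two fidelities\<close>

lemma pos_def_gmean:
  fixes A B :: "complex^'n^'n"
  assumes A: "pos_def A" and B: "pos_def B"
  shows "pos_def (gmean A B)"
proof -
  define S where "S = msqrt A"
  have S: "pos_def S" unfolding S_def by (rule pos_def_msqrt[OF A])
  have Si: "pos_def (matrix_inv S)" by (rule pos_def_matrix_inv[OF S])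
  have "pos_def (matrix_inv S ** B ** matrix_inv S)"
    using pos_def_congruence[OF B pos_def_invertible[OF Si]] by (simp add: pos_def_hermitian[OF Si])
  then have "pos_def (msqrt (matrix_inv S ** B ** matrix_inv S))" by (rule pos_def_msqrt)
  from pos_def_congruence[OF this pos_def_invertible[OF S]] show ?thesis
    by (simp add: gmean_def S_def[symmetric] pos_def_hermitian[OF S])
qed

lemma gmean_riccati:
  fixes A B :: "complex^'n^'n"
  assumes A: "pos_def A" and B: "pos_def B"
  shows "gmean A B ** matrix_inv A ** gmean A B = B"
proof -
  define S where "S = msqrt A"
  define Si where "Si = matrix_inv S"
  define X where "X = msqrt (Si ** B ** Si)"
  have S: "invertible S" unfolding S_def by (rule pos_def_invertible[OF pos_def_msqrt[OF A]])
  have SSi: "S ** Si = mat 1" "Si ** S = mat 1"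
    unfolding Si_def by (simp_all add: matrix_inv_right[OF S] matrix_inv_left[OF S])
  have "pos_def (Si ** B ** Si)"
    using pos_def_congruence[OF B invertible_right_inverse[THEN iffD2, OF exI, OF SSi(2)]]
    by (simp add: Si_def S_def pos_def_hermitian[OF pos_def_matrix_inv[OF pos_def_msqrt[OF A]]])
  then have XX: "X ** X = Si ** B ** Si"
    unfolding X_def by (rule msqrt_mult_self[OF pos_def_imp_pos_semidef])
  have "gmean A B ** matrix_inv A ** gmean A B = (S ** X ** S) ** (Si ** Si) ** (S ** X ** S)"
    using matrix_inv_eq_square_matrix_inv_msqrt[OF A] by (simp add: gmean_def S_def Si_def X_def)
  also have "\<dots> = S ** (X ** X) ** S"
    by (simp add: matrix_mul_assoc[symmetric] matrix_mul_inverse_cancel[OF SSi(1)]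
        matrix_mul_inverse_cancel[OF SSi(2)])
  also have "\<dots> = B"
    by (simp add: XX matrix_mul_assoc[symmetric] matrix_mul_inverse_cancel[OF SSi(1)])
      (simp add: matrix_mul_assoc SSi)
  finally show ?thesis .
qed

lemma gen_fidelity_sandwich:
  fixes R K L :: "complex^'n^'n"
  assumes R: "pos_def R" and K: "pos_semidef K" and L: "pos_semidef L"
  shows "gen_fidelity R (K ** R ** K) (L ** R ** L) = trace (K ** L ** R)"
proof -
  define S where "S = msqrt R"
  define Si where "Si = matrix_inv S"
  have S: "hermitian_mat S" "S ** S = R"
    using hermitian_msqrt msqrt_mult_self pos_def_imp_pos_semidef[OF R]
    by (auto simp: S_def hermitian_mat_def)
  have "invertible S" unfolding S_def by (rule pos_def_invertible[OF pos_def_msqrt[OF R]])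
  then have SSi: "S ** Si = mat 1" "Si ** S = mat 1"
    unfolding Si_def by (simp_all add: matrix_inv_right matrix_inv_left)
  have "gen_fidelity R (K ** R ** K) (L ** R ** L) = trace ((S ** K ** S) ** (Si ** Si) ** (S ** L ** S))"
    using msqrt_sandwich[OF K S(1)] msqrt_sandwich[OF L S(1)] matrix_inv_eq_square_matrix_inv_msqrt[OF R]
    by (simp add: gen_fidelity_def S_def[symmetric] Si_def[symmetric] S(2))
  also have "\<dots> = trace (S ** (K ** (L ** S)))"
    by (simp add: matrix_mul_assoc[symmetric] matrix_mul_inverse_cancel[OF SSi(1)]
        matrix_mul_inverse_cancel[OF SSi(2)])
  also have "\<dots> = trace ((K ** (L ** S)) ** S)" by (rule trace_mul_sym)
  also have "\<dots> = trace (K ** L ** R)" by (simp add: matrix_mul_assoc[symmetric] S(2))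
  finally show ?thesis .
qed

lemma uhlmann_fidelity_riccati:
  fixes P G Q :: "complex^'n^'n"
  assumes P: "pos_semidef P" and G: "pos_semidef G" and Q: "G ** P ** G = Q"
  shows "uhlmann_fidelity P Q = trace (G ** P)"
proof -
  define T where "T = msqrt P"
  have T: "hermitian_mat T" "T ** T = P"
    using hermitian_msqrt[OF P] msqrt_mult_self[OF P] by (auto simp: T_def hermitian_mat_def)
  have "uhlmann_fidelity P Q = trace (T ** (G ** T))"
    using msqrt_sandwich[OF G T(1)] by (simp add: uhlmann_fidelity_def T_def[symmetric] T(2) Q
        matrix_mul_assoc)
  also have "\<dots> = trace ((G ** T) ** T)" by (rule trace_mul_sym)
  also have "\<dots> = trace (G ** P)" by (simp add: T(2) flip: matrix_mul_assoc)
  finally show ?thesis .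
qed

lemma pos_def_inv_convex_comb_mult:
  fixes G :: "complex^'n^'n"
  assumes G: "pos_def G" and "0 \<le> t" and "t \<le> 1"
  shows "pos_def (matrix_inv ((1 - t) *\<^sub>R mat 1 + t *\<^sub>R G) ** G)"
proof -
  \<comment> \<open>The product is the inverse of \<open>(1 - t) G\<^sup>-\<^sup>1 + t I\<close>, a convex combination of positive matrices.\<close>
  define M where "M = (1 - t) *\<^sub>R mat 1 + t *\<^sub>R G"
  define N where "N = (1 - t) *\<^sub>R matrix_inv G + t *\<^sub>R mat 1"
  have "pos_def N"
    unfolding N_def using pos_def_convex_comb[OF pos_def_matrix_inv[OF G] pos_def_mat_1] assms(2,3)
    by simp
  have "pos_def M"
    unfolding M_def using pos_def_convex_comb[OF pos_def_mat_1 G] assms(2,3) by simp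
  have G_inv: "invertible G" by (rule pos_def_invertible[OF G])
  have "N = matrix_inv G ** M"
    by (simp add: M_def N_def matrix_add_ldistrib matrix_scalar_ac scalar_matrix_assoc[symmetric]
        matrix_inv_left[OF G_inv])
  then have "N ** (matrix_inv M ** G) = mat 1"
    using matrix_inv_right[OF pos_def_invertible[OF \<open>pos_def M\<close>]]
    by (simp add: matrix_mul_assoc[symmetric] matrix_mul_inverse_cancel matrix_inv_left[OF G_inv])
  then have "matrix_inv N = matrix_inv M ** G" by (rule matrix_inv_eqI)
  then show ?thesis using pos_def_matrix_inv[OF \<open>pos_def N\<close>] by (simp add: M_def)
qed

lemma gen_fidelity_commuting_congruence:
  fixes P M G :: "complex^'n^'n"
  assumes P: "pos_def P" and M: "pos_def M" and L: "pos_semidef (matrix_inv M ** G)"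
    and MG: "M ** G = G ** M"
  shows "gen_fidelity (M ** P ** M) P (G ** P ** G) = trace (G ** P)"
proof -
  define Mi where "Mi = matrix_inv M"
  have "invertible M" by (rule pos_def_invertible[OF M])
  then have MMi: "M ** Mi = mat 1" "Mi ** M = mat 1"
    by (simp_all add: Mi_def matrix_inv_right matrix_inv_left)
  note cancel = matrix_mul_inverse_cancel[OF MMi(1)] matrix_mul_inverse_cancel[OF MMi(2)]
  have commute: "G ** (M ** X) = M ** (G ** X)" for X
    by (simp add: matrix_mul_assoc MG)
  have "pos_def (M ** P ** M)"
    using pos_def_congruence[OF P pos_def_invertible[OF M]] by (simp add: pos_def_hermitian[OF M])
  moreover have "P = Mi ** (M ** P ** M) ** Mi"
    by (simp add: matrix_mul_assoc[symmetric] cancel MMi(1))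
  moreover have "G ** P ** G = (Mi ** G) ** (M ** P ** M) ** (Mi ** G)"
    by (simp add: matrix_mul_assoc[symmetric] cancel commute)
  ultimately have "gen_fidelity (M ** P ** M) P (G ** P ** G)
      = trace (Mi ** (Mi ** G) ** (M ** P ** M))"
    using gen_fidelity_sandwich[OF _ pos_def_imp_pos_semidef[OF pos_def_matrix_inv[OF M]] L]
    by (metis Mi_def)
  also have "\<dots> = trace ((Mi ** Mi ** G ** M ** P) ** M)"
    by (simp add: matrix_mul_assoc)
  also have "\<dots> = trace (M ** (Mi ** Mi ** G ** M ** P))"
    by (rule trace_mul_sym)
  also have "\<dots> = trace (G ** P)"
    by (simp add: matrix_mul_assoc[symmetric] cancel commute)
  finally show ?thesis .
qed

theorem mainTheorem4:
  fixes P Q :: "complex^'n^'n" and t :: real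
  assumes "pos_def P" and "pos_def Q" and "0 \<le> t" and "t \<le> 1"
  shows "gen_fidelity (bw_geodesic P Q t) P Q = uhlmann_fidelity P Q"
proof -
  define G where "G = gmean (matrix_inv P) Q"
  define M where "M = (1 - t) *\<^sub>R mat 1 + t *\<^sub>R G"
  have G: "pos_def G"
    unfolding G_def using pos_def_gmean[OF pos_def_matrix_inv[OF assms(1)] assms(2)] .
  have GPG: "G ** P ** G = Q"
    using gmean_riccati[OF pos_def_matrix_inv[OF assms(1)] assms(2)]
    by (simp add: G_def matrix_inv_matrix_inv[OF pos_def_invertible[OF assms(1)]])
  have "pos_def M" unfolding M_def using pos_def_convex_comb[OF pos_def_mat_1 G] assms(3,4) by simp
  moreover have "M ** G = G ** M"
    by (simp add: M_def matrix_add_rdistrib_complex matrix_add_ldistrib matrix_scalar_ac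
        scalar_matrix_assoc[symmetric])
  moreover have "pos_semidef (matrix_inv M ** G)"
    unfolding M_def by (rule pos_def_imp_pos_semidef[OF pos_def_inv_convex_comb_mult[OF G assms(3,4)]])
  ultimately have "gen_fidelity (M ** P ** M) P Q = trace (G ** P)"
    using gen_fidelity_commuting_congruence[OF assms(1)] GPG by metis
  moreover have "bw_geodesic P Q t = M ** P ** M"
    by (simp add: bw_geodesic_def M_def G_def Let_def)
  moreover have "uhlmann_fidelity P Q = trace (G ** P)"
    using uhlmann_fidelity_riccati[OF pos_def_imp_pos_semidef pos_def_imp_pos_semidef GPG] assms(1) G
    by blast
  ultimately show ?thesis by simp
qed

end
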